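(* Let $M\in S_d^+$, let $\mathcal T$ be an $M$-reduced mesh and $\Lambda$ the associated Hopf–Lax operator. Let $\delta_+,\delta_-:\mathbb Z^d\to\mathbb R_+\cup\{\infty\}$ be respectively a discrete super-solution and a discrete sub-solution. Then $\delta_-\le\delta_+$ on $\mathbb Z^d$.
   Context: $S_d^+$ is the set of $d\times d$ symmetric positive definite matrices; $\langle u,v\rangle_M:=u^TMv$, $\|u\|_M:=\sqrt{\langle u,u\rangle_M}$. An $M$-reduced mesh is a finite conforming mesh $\mathcal T$ of simplices in $\mathbb R^d$ such that: (I) the union of its simplices is a neighborhood of the origin; (II) the vertices of each $T\in\mathcal T$ lie in $\mathbb Z^d$ and $T$ has volume $1/d!$; (III) each $T\in\mathcal T$ has the origin as a vertex, and its other vertices $v_1,\dots,v_d$ satisfy $\langle v_i,v_j\rangle_M\ge0$ for all $i,j$. For $\delta:\mathbb Z^d\to\mathbb R_+\cup\{\infty\}$ and $z\in\mathbb Z^d$, $\Lambda(\delta,z):=\min\{\|\sum_{i=1}^k\alpha_iv_i\|_M+\sum_{i=1}^k\alpha_i\delta(z+v_i)\}$ over $1\le k\le d$, $\alpha_i\ge0$ with $\sum_i\alpha_i=1$, and non-zero vertices $v_1,\dots,v_k$ of a common simplex of $\mathcal T$ (convention $0\times\infty=0$). A map $\delta:\mathbb Z^d\to\mathbb R_+\cup\{\infty\}$ is a super-solution (resp. sub-solution) if $\delta(0)=0$ and $\delta(z)\ge\Lambda(\delta,z)$ (resp. $\delta(z)\le\Lambda(\delta,z)$) for all $z\in\mathbb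 Z^d\setminus\{0\}$. *)

theory Defs
  imports "HOL-Analysis.Analysis" "HOL-Library.Extended_Nonnegative_Real"
begin

text \<open>Lattice points of Z^d are represented by the type int^'n; d = CARD('n).\<close>

definition rvec :: "int ^ 'n \<Rightarrow> real ^ 'n" where
  "rvec z = (\<chi> i. real_of_int (z $ i))"

definition sym_posdef :: "real ^ 'n ^ 'n \<Rightarrow> bool" where
  "sym_posdef M \<longleftrightarrow> transpose M = M \<and> (\<forall>x. x \<noteq> 0 \<longrightarrow> x \<bullet> (M *v x) > 0)"

definition inner_M :: "real ^ 'n ^ 'n \<Rightarrow> real ^ 'n \<Rightarrow> real ^ 'n \<Rightarrow> real" where
  "inner_M M u v = u \<bullet> (M *v v)"

definition norm_M :: "real ^ 'n ^ 'n \<Rightarrow> real ^ 'n \<Rightarrow> real" where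
  "norm_M M u = sqrt (inner_M M u u)"

text \<open>A simplex of the mesh is given by its finite set of d+1 integer vertices;
  the simplex itself is the convex hull of (the real images of) these vertices.\<close>

definition simplex_of :: "(int ^ 'n) set \<Rightarrow> (real ^ 'n) set" where
  "simplex_of T = convex hull (rvec ` T)"

definition M_reduced_mesh :: "real ^ 'n ^ 'n \<Rightarrow> (int ^ 'n) set set \<Rightarrow> bool" where
  "M_reduced_mesh M \<T> \<longleftrightarrow>
     finite \<T> \<and>
     (\<forall>T\<in>\<T>. finite T \<and> card T = CARD('n) + 1) \<and>
     \<comment> \<open>conforming: two simplices meet in a common face\<close>
     (\<forall>T1\<in>\<T>. \<forall>T2\<in>\<T>. simplex_of T1 \<inter> simplex_of T2 = simplex_of (T1 \<inter> T2)) \<and>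
     \<comment> \<open>(I) the union of the simplices is a neighbourhood of the origin\<close>
     0 \<in> interior (\<Union>T\<in>\<T>. simplex_of T) \<and>
     \<comment> \<open>(II) integer vertices (by typing) and volume 1/d!\<close>
     (\<forall>T\<in>\<T>. measure lebesgue (simplex_of T) = 1 / fact CARD('n)) \<and>
     \<comment> \<open>(III) origin is a vertex, other vertices pairwise M-acute\<close>
     (\<forall>T\<in>\<T>. 0 \<in> T \<and> (\<forall>v\<in>T - {0}. \<forall>w\<in>T - {0}. inner_M M (rvec v) (rvec w) \<ge> 0))"

text \<open>A choice of non-zero vertices v_1..v_k of a common simplex with
  convex weights is encoded by a non-empty set S of non-zero vertices of some T and
  weights alpha on S (repeated vertices can be merged without changing the value).
  The product in ennreal satisfies 0 * \<infinity> = 0.\<close>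

definition hopf_lax ::
  "real ^ 'n ^ 'n \<Rightarrow> (int ^ 'n) set set \<Rightarrow> (int ^ 'n \<Rightarrow> ennreal) \<Rightarrow> int ^ 'n \<Rightarrow> ennreal" where
  "hopf_lax M \<T> \<delta> z = Inf {ennreal (norm_M M (\<Sum>v\<in>S. \<alpha> v *\<^sub>R rvec v))
        + (\<Sum>v\<in>S. ennreal (\<alpha> v) * \<delta> (z + v)) | S \<alpha>.
      (\<exists>T\<in>\<T>. S \<subseteq> T - {0}) \<and> S \<noteq> {} \<and> (\<forall>v\<in>S. \<alpha> v \<ge> 0) \<and> (\<Sum>v\<in>S. \<alpha> v) = 1}"

definition super_solution ::
  "real ^ 'n ^ 'n \<Rightarrow> (int ^ 'n) set set \<Rightarrow> (int ^ 'n \<Rightarrow> ennreal) \<Rightarrow> bool" where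
  "super_solution M \<T> \<delta> \<longleftrightarrow> \<delta> 0 = 0 \<and> (\<forall>z. z \<noteq> 0 \<longrightarrow> \<delta> z \<ge> hopf_lax M \<T> \<delta> z)"

definition sub_solution ::
  "real ^ 'n ^ 'n \<Rightarrow> (int ^ 'n) set set \<Rightarrow> (int ^ 'n \<Rightarrow> ennreal) \<Rightarrow> bool" where
  "sub_solution M \<T> \<delta> \<longleftrightarrow> \<delta> 0 = 0 \<and> (\<forall>z. z \<noteq> 0 \<longrightarrow> \<delta> z \<le> hopf_lax M \<T> \<delta> z)"

end

theory Submission
  imports Defs
begin

(*
  Fix 0 \<le> \<theta> < 1. Positive definiteness and the acuteness condition (III) give a uniform
  lower bound \<rho> > 0 on the M-norm of every stencil direction, and make this norm monotone in the
  set of vertices used. Hence a stencil that attains the Hopf-Lax value of \<delta>p at a point of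
  level D up to k = (1 - \<theta>) \<rho> / 2 must put positive weight on neighbours of level below D - k;
  restricted to those neighbours and renormalised, it is a competitor in the sub-solution
  inequality for \<delta>m that shows \<theta> \<delta>m < D there. Induction on the level in steps of k gives
  \<theta> \<delta>m \<le> \<delta>p, and letting \<theta> tend to 1 gives the theorem.
*)

definition stencil :: "(int ^ 'n) set set \<Rightarrow> (int ^ 'n) set \<Rightarrow> (int ^ 'n \<Rightarrow> real) \<Rightarrow> bool" where
  "stencil \<T> S \<alpha> \<longleftrightarrow>
     (\<exists>T\<in>\<T>. S \<subseteq> T - {0}) \<and> S \<noteq> {} \<and> (\<forall>v\<in>S. 0 \<le> \<alpha> v) \<and> (\<Sum>v\<in>S. \<alpha> v) = 1"

definition stencil_value ::
  "real ^ 'n ^ 'n \<Rightarrow> (int ^ 'n \<Rightarrow> ennreal) \<Rightarrow> int ^ 'n \<Rightarrow> (int ^ 'n) set \<Rightarrow> (int ^ 'n \<Rightarrow> real) \<Rightarrow> ennreal"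
  where
  "stencil_value M \<delta> z S \<alpha> =
     ennreal (norm_M M (\<Sum>v\<in>S. \<alpha> v *\<^sub>R rvec v)) + (\<Sum>v\<in>S. ennreal (\<alpha> v) * \<delta> (z + v))"

lemma hopf_lax_eq_Inf_stencil_value:
  "hopf_lax M \<T> \<delta> z = Inf {stencil_value M \<delta> z S \<alpha> | S \<alpha>. stencil \<T> S \<alpha>}"
  unfolding hopf_lax_def stencil_def stencil_value_def by meson

lemma hopf_lax_le_stencil_value: "stencil \<T> S \<alpha> \<Longrightarrow> hopf_lax M \<T> \<delta> z \<le> stencil_value M \<delta> z S \<alpha>"
  unfolding hopf_lax_eq_Inf_stencil_value by (rule Inf_lower) blast

lemma hopf_lax_lessE:
  assumes "hopf_lax M \<T> \<delta> z < c"
  obtains S \<alpha> where "stencil \<T> S \<alpha>" "stencil_value M \<delta> z S \<alpha> < c"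
  using assms unfolding hopf_lax_eq_Inf_stencil_value Inf_less_iff by blast

lemma stencil_finite: "stencil \<T> S \<alpha> \<Longrightarrow> finite S"
  unfolding stencil_def by (metis sum.infinite zero_neq_one)

lemma inner_M_sum_scaleR:
  "inner_M M (\<Sum>v\<in>S. a v *\<^sub>R x v) (\<Sum>w\<in>T. b w *\<^sub>R y w)
     = (\<Sum>v\<in>S. \<Sum>w\<in>T. a v * b w * inner_M M (x v) (y w))"
proof -
  have "M *v (\<Sum>w\<in>T. b w *\<^sub>R y w) = (\<Sum>w\<in>T. b w *\<^sub>R (M *v y w))"
    by (simp add: linear_sum[OF matrix_vector_mul_linear] matrix_vector_mult_scaleR)
  then show ?thesis
    unfolding inner_M_def
    by (subst sum.swap) (simp add: inner_sum_left inner_sum_right sum_distrib_left ac_simps)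
qed

lemma norm_M_scaleR: "norm_M M (c *\<^sub>R u) = \<bar>c\<bar> * norm_M M u"
  unfolding norm_M_def inner_M_def
  by (simp add: matrix_vector_mult_scaleR real_sqrt_mult mult.assoc[symmetric])

lemma norm_M_nonneg: "sym_posdef M \<Longrightarrow> 0 \<le> norm_M M u"
  unfolding sym_posdef_def norm_M_def inner_M_def
  by (cases "u = 0") (auto simp: less_imp_le)

lemma norm_M_sum_subset_le:
  assumes "finite S" "L \<subseteq> S" "\<And>v. v \<in> S \<Longrightarrow> 0 \<le> \<alpha> v"
    and "\<And>v w. v \<in> S \<Longrightarrow> w \<in> S \<Longrightarrow> 0 \<le> inner_M M (x v) (x w)"
  shows "norm_M M (\<Sum>v\<in>L. \<alpha> v *\<^sub>R x v) \<le> norm_M M (\<Sum>v\<in>S. \<alpha> v *\<^sub>R x v)"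
proof -
  let ?q = "\<lambda>v w. \<alpha> v * \<alpha> w * inner_M M (x v) (x w)"
  have q_nonneg: "0 \<le> ?q v w" if "v \<in> S" "w \<in> S" for v w
    using assms that by simp
  have "(\<Sum>v\<in>L. \<Sum>w\<in>L. ?q v w) \<le> (\<Sum>v\<in>L. \<Sum>w\<in>S. ?q v w)"
    using assms q_nonneg by (intro sum_mono sum_mono2) auto
  also have "\<dots> \<le> (\<Sum>v\<in>S. \<Sum>w\<in>S. ?q v w)"
    using assms q_nonneg by (intro sum_mono2 sum_nonneg) auto
  finally show ?thesis
    unfolding norm_M_def inner_M_sum_scaleR by simp
qed

lemma norm_M_convex_sum_ge:
  assumes "finite S" "card S \<le> N" "\<And>v. v \<in> S \<Longrightarrow> 0 \<le> \<alpha> v" "(\<Sum>v\<in>S. \<alpha> v) = 1"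
    and "\<And>v w. v \<in> S \<Longrightarrow> w \<in> S \<Longrightarrow> 0 \<le> inner_M M (x v) (x w)"
    and diag: "\<And>v. v \<in> S \<Longrightarrow> m \<le> inner_M M (x v) (x v)" and "0 \<le> m"
  shows "sqrt (m / N) \<le> norm_M M (\<Sum>v\<in>S. \<alpha> v *\<^sub>R x v)"
proof -
  have "1 \<le> (\<Sum>v\<in>S. (\<alpha> v)\<^sup>2) * card S"
    using sum_squared_le_sum_of_squares[of \<alpha> S] assms(4) by simp
  also have "\<dots> \<le> (\<Sum>v\<in>S. (\<alpha> v)\<^sup>2) * N"
    using assms(2) by (intro mult_left_mono sum_nonneg) auto
  finally have sq: "1 \<le> (\<Sum>v\<in>S. (\<alpha> v)\<^sup>2) * N" .
  then have "N > 0"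
    by (cases "N = 0") auto
  moreover have "m \<le> m * ((\<Sum>v\<in>S. (\<alpha> v)\<^sup>2) * N)"
    using mult_left_mono[OF sq \<open>0 \<le> m\<close>] by simp
  ultimately have "m / N \<le> m * (\<Sum>v\<in>S. (\<alpha> v)\<^sup>2)"
    by (simp add: field_simps)
  also have "\<dots> \<le> (\<Sum>v\<in>S. \<alpha> v * \<alpha> v * inner_M M (x v) (x v))"
    unfolding sum_distrib_left
    using diag by (intro sum_mono) (simp add: power2_eq_square mult.commute[of m] mult_left_mono)
  also have "\<dots> \<le> (\<Sum>v\<in>S. \<Sum>w\<in>S. \<alpha> v * \<alpha> w * inner_M M (x v) (x w))"
  proof (intro sum_mono)
    fix v assume "v \<in> S"
    then show "\<alpha> v * \<alpha> v * inner_M M (x v) (x v) \<le> (\<Sum>w\<in>S. \<alpha> v * \<alpha> w * inner_M M (x v) (x w))"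
      using assms by (intro member_le_sum[where f = "\<lambda>w. \<alpha> v * \<alpha> w * inner_M M (x v) (x w)"]) auto
  qed
  finally show ?thesis
    unfolding norm_M_def inner_M_sum_scaleR by simp
qed

lemma rvec_eq_0_iff: "rvec v = 0 \<longleftrightarrow> v = 0"
  unfolding rvec_def by (auto simp: vec_eq_iff)

lemma M_reduced_mesh_simplexD:
  fixes M :: "real ^ 'n ^ 'n"
  assumes "M_reduced_mesh M \<T>" "T \<in> \<T>"
  shows "finite T" "card T = CARD('n) + 1" "0 \<in> T"
    and "\<And>v w. v \<in> T - {0} \<Longrightarrow> w \<in> T - {0} \<Longrightarrow> 0 \<le> inner_M M (rvec v) (rvec w)"
proof -
  have "\<forall>T\<in>\<T>. finite T \<and> card T = CARD('n) + 1"
    and "\<forall>T\<in>\<T>. 0 \<in> T \<and> (\<forall>v\<in>T - {0}. \<forall>w\<in>T - {0}. 0 \<le> inner_M M (rvec v) (rvec w))"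
    using assms(1) unfolding M_reduced_mesh_def by simp_all
  with assms(2) show "finite T" "card T = CARD('n) + 1" "0 \<in> T"
    and "\<And>v w. v \<in> T - {0} \<Longrightarrow> w \<in> T - {0} \<Longrightarrow> 0 \<le> inner_M M (rvec v) (rvec w)"
    by auto
qed

lemma mesh_stencil_acute:
  assumes "M_reduced_mesh M \<T>" "stencil \<T> S \<alpha>" "v \<in> S" "w \<in> S"
  shows "0 \<le> inner_M M (rvec v) (rvec w)"
proof -
  obtain T where "T \<in> \<T>" "S \<subseteq> T - {0}"
    using assms(2) unfolding stencil_def by blast
  with assms show ?thesis
    using M_reduced_mesh_simplexD(4) by blast
qed

lemma mesh_stencil_card_le:
  fixes M :: "real ^ 'n ^ 'n"
  assumes "M_reduced_mesh M \<T>" "stencil \<T> S \<alpha>"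
  shows "card S \<le> CARD('n)"
proof -
  obtain T where T: "T \<in> \<T>" "S \<subseteq> T - {0}"
    using assms(2) unfolding stencil_def by blast
  with M_reduced_mesh_simplexD[OF assms(1) T(1)] show ?thesis
    using card_mono[of "T - {0}" S] by simp
qed

lemma mesh_stencil_norm_ge:
  fixes M :: "real ^ 'n ^ 'n"
  assumes "sym_posdef M" "M_reduced_mesh M \<T>"
  obtains \<rho> where "0 < \<rho>" "\<And>S \<alpha>. stencil \<T> S \<alpha> \<Longrightarrow> \<rho> \<le> norm_M M (\<Sum>v\<in>S. \<alpha> v *\<^sub>R rvec v)"
proof -
  define V where "V = \<Union>\<T> - {0}"
  \<comment> \<open>inserting 1 keeps the minimum defined when no simplex has a non-zero vertex\<close>
  define m where "m = Min (insert 1 ((\<lambda>v. inner_M M (rvec v) (rvec v)) ` V))"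
  have "finite \<T>"
    using assms(2) unfolding M_reduced_mesh_def by simp
  then have "finite V"
    unfolding V_def using M_reduced_mesh_simplexD(1)[OF assms(2)] by auto
  have "0 < inner_M M (rvec v) (rvec v)" if "v \<in> V" for v
    using assms(1) that rvec_eq_0_iff unfolding sym_posdef_def inner_M_def V_def by blast
  with \<open>finite V\<close> have "0 < m"
    unfolding m_def by (subst Min_gr_iff) auto
  have m_le: "m \<le> inner_M M (rvec v) (rvec v)" if "v \<in> V" for v
    unfolding m_def using \<open>finite V\<close> that by (intro Min_le) auto
  show ?thesis
  proof
    show "0 < sqrt (m / CARD('n))"
      using \<open>0 < m\<close> by simp
    fix S \<alpha> assume st: "stencil \<T> S \<alpha>"
    then have "S \<subseteq> V"
      unfolding stencil_def V_def by blast
    with st show "sqrt (m / CARD('n)) \<le> norm_M M (\<Sum>v\<in>S. \<alpha> v *\<^sub>R rvec v)"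
      using m_le \<open>0 < m\<close> mesh_stencil_acute[OF assms(2) st]
      by (intro norm_M_convex_sum_ge[OF stencil_finite[OF st] mesh_stencil_card_le[OF assms(2) st]])
        (auto simp: stencil_def)
  qed
qed

lemma stencil_value_scale_weights:
  assumes "0 \<le> c"
  shows "stencil_value M \<delta> z S (\<lambda>v. c * \<beta> v) = ennreal c * stencil_value M \<delta> z S \<beta>"
proof -
  have "(\<Sum>v\<in>S. (c * \<beta> v) *\<^sub>R rvec v) = c *\<^sub>R (\<Sum>v\<in>S. \<beta> v *\<^sub>R rvec v)"
    by (simp add: scaleR_sum_right)
  then show ?thesis
    using assms unfolding stencil_value_def
    by (simp add: norm_M_scaleR ennreal_mult' distrib_left sum_distrib_left mult.assoc)
qed

lemma sub_solution_le_stencil_value: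
  assumes "sub_solution M \<T> \<delta>" "z \<noteq> 0" "T \<in> \<T>" "L \<subseteq> T - {0}"
    and "\<And>v. v \<in> L \<Longrightarrow> 0 \<le> \<alpha> v" and "0 < sum \<alpha> L"
  shows "ennreal (sum \<alpha> L) * \<delta> z \<le> stencil_value M \<delta> z L \<alpha>"
proof -
  define s where "s = sum \<alpha> L"
  define \<beta> where "\<beta> v = \<alpha> v / s" for v
  have "stencil \<T> L \<beta>"
    using assms unfolding stencil_def \<beta>_def s_def by (auto simp: sum_divide_distrib[symmetric])
  then have "\<delta> z \<le> stencil_value M \<delta> z L \<beta>"
    using assms(1,2) hopf_lax_le_stencil_value unfolding sub_solution_def by (metis order_trans)
  then have "ennreal s * \<delta> z \<le> ennreal s * stencil_value M \<delta> z L \<beta>"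
    by (rule mult_left_mono) simp
  also have "\<dots> = stencil_value M \<delta> z L (\<lambda>v. s * \<beta> v)"
    using assms(6) unfolding s_def by (simp add: stencil_value_scale_weights)
  also have "(\<lambda>v. s * \<beta> v) = \<alpha>"
    using assms(6) unfolding \<beta>_def s_def by auto
  finally show ?thesis
    unfolding s_def .
qed

lemma sum_ennreal_mult_finite:
  assumes "\<And>v. v \<in> L \<Longrightarrow> 0 \<le> \<alpha> v" "\<And>v. v \<in> L \<Longrightarrow> f v < \<infinity>"
  shows "(\<Sum>v\<in>L. ennreal (\<alpha> v) * f v) = ennreal (\<Sum>v\<in>L. \<alpha> v * enn2real (f v))"
proof -
  have "(\<Sum>v\<in>L. ennreal (\<alpha> v) * f v) = (\<Sum>v\<in>L. ennreal (\<alpha> v * enn2real (f v)))"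
    using assms by (intro sum.cong) (auto simp: ennreal_mult' ennreal_enn2real)
  also have "\<dots> = ennreal (\<Sum>v\<in>L. \<alpha> v * enn2real (f v))"
    using assms by (intro sum_ennreal) simp
  finally show ?thesis .
qed

lemma sum_ennreal_mult_ge:
  assumes "0 \<le> c" "\<And>v. v \<in> S \<Longrightarrow> 0 \<le> \<alpha> v" "\<And>v. v \<in> S \<Longrightarrow> ennreal c \<le> f v"
  shows "ennreal (sum \<alpha> S * c) \<le> (\<Sum>v\<in>S. ennreal (\<alpha> v) * f v)"
proof -
  have "ennreal (sum \<alpha> S * c) = (\<Sum>v\<in>S. ennreal (\<alpha> v) * ennreal c)"
    using assms by (simp add: sum_distrib_right sum_ennreal[symmetric] ennreal_mult)
  also have "\<dots> \<le> (\<Sum>v\<in>S. ennreal (\<alpha> v) * f v)"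
    using assms by (intro sum_mono mult_left_mono) auto
  finally show ?thesis .
qed

lemma stencil_value_less_split:
  assumes posdef: "sym_posdef M" and st: "stencil \<T> S \<alpha>" and "0 \<le> c"
    and less: "stencil_value M \<delta> w S \<alpha> < ennreal r"
  defines "L \<equiv> {v \<in> S. \<delta> (w + v) < ennreal c}"
  shows "norm_M M (\<Sum>v\<in>S. \<alpha> v *\<^sub>R rvec v) + (\<Sum>v\<in>L. \<alpha> v * enn2real (\<delta> (w + v)))
           + sum \<alpha> (S - L) * c < r"
proof -
  have fin: "finite S" and \<alpha>_nonneg: "\<And>v. v \<in> S \<Longrightarrow> 0 \<le> \<alpha> v"
    using st stencil_finite unfolding stencil_def by auto
  have LS: "L \<subseteq> S"
    unfolding L_def by auto
  define P where "P = norm_M M (\<Sum>v\<in>S. \<alpha> v *\<^sub>R rvec v)"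
  define X where "X = (\<Sum>v\<in>L. \<alpha> v * enn2real (\<delta> (w + v)))"
  define a where "a = sum \<alpha> (S - L)"
  have "0 \<le> P" "0 \<le> X" "0 \<le> a"
    using norm_M_nonneg[OF posdef] \<alpha>_nonneg LS unfolding P_def X_def a_def by (auto intro!: sum_nonneg)
  have "(\<Sum>v\<in>L. ennreal (\<alpha> v) * \<delta> (w + v)) = ennreal X"
    unfolding X_def using LS \<alpha>_nonneg
    by (intro sum_ennreal_mult_finite) (auto simp: L_def less_top[symmetric] intro: order.strict_trans)
  then have "ennreal (P + X + a * c)
               = ennreal P + ((\<Sum>v\<in>L. ennreal (\<alpha> v) * \<delta> (w + v)) + ennreal (a * c))"
    using \<open>0 \<le> P\<close> \<open>0 \<le> X\<close> \<open>0 \<le> a\<close> \<open>0 \<le> c\<close> by (simp add: ennreal_plus add.assoc)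
  also have "\<dots> \<le> ennreal P + ((\<Sum>v\<in>L. ennreal (\<alpha> v) * \<delta> (w + v))
                                   + (\<Sum>v\<in>S - L. ennreal (\<alpha> v) * \<delta> (w + v)))"
    unfolding a_def using \<open>0 \<le> c\<close> \<alpha>_nonneg
    by (intro add_left_mono sum_ennreal_mult_ge) (auto simp: L_def)
  also have "\<dots> = stencil_value M \<delta> w S \<alpha>"
    unfolding stencil_value_def P_def sum.subset_diff[OF LS fin] by (simp add: ac_simps)
  finally have "ennreal (P + X + a * c) < ennreal r"
    using less by (rule le_less_trans)
  then show ?thesis
    using \<open>0 \<le> P\<close> \<open>0 \<le> X\<close> \<open>0 \<le> a\<close> \<open>0 \<le> c\<close> unfolding P_def X_def a_def
    by (subst (asm) ennreal_less_iff) auto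
qed

lemma descent_arith:
  fixes \<theta> k D P PL X s a :: real
  assumes "s + a = 1" "0 \<le> s" "0 \<le> k" "0 \<le> \<theta>" "PL \<le> P" "2 * k \<le> (1 - \<theta>) * P"
    and "P + X + a * (D - k) < D + k"
  shows "\<theta> * PL + X < s * D"
proof -
  have "\<theta> * PL \<le> P - 2 * k"
    using assms(6) mult_left_mono[OF assms(5,4)] by (simp add: algebra_simps)
  moreover have "s * D = D - k - a * (D - k) + s * k"
    using assms(1) by (simp add: algebra_simps flip: eq_diff_eq)
  moreover have "0 \<le> s * k"
    using assms(2,3) by simp
  ultimately show ?thesis
    using assms(7) by linarith
qed

lemma stencil_descent:
  fixes \<theta> k D :: real
  assumes posdef: "sym_posdef M" and st: "stencil \<T> S \<alpha>"
    and acute: "\<And>v u. v \<in> S \<Longrightarrow> u \<in> S \<Longrightarrow> 0 \<le> inner_M M (rvec v) (rvec u)"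
    and "0 \<le> \<theta>" "0 \<le> k"
    and gap: "2 * k \<le> (1 - \<theta>) * norm_M M (\<Sum>v\<in>S. \<alpha> v *\<^sub>R rvec v)"
    and near_optimal: "stencil_value M \<delta> w S \<alpha> < ennreal (D + k)"
  defines "L \<equiv> {v \<in> S. \<delta> (w + v) < ennreal (D - k)}"
  shows "0 < sum \<alpha> L"
    and "ennreal \<theta> * ennreal (norm_M M (\<Sum>v\<in>L. \<alpha> v *\<^sub>R rvec v))
           + (\<Sum>v\<in>L. ennreal (\<alpha> v) * \<delta> (w + v)) < ennreal (sum \<alpha> L * D)"
proof -
  have fin: "finite S" and \<alpha>_nonneg: "\<And>v. v \<in> S \<Longrightarrow> 0 \<le> \<alpha> v" and "sum \<alpha> S = 1"
    using st stencil_finite unfolding stencil_def by auto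
  have LS: "L \<subseteq> S"
    unfolding L_def by auto
  define s where "s = sum \<alpha> L"
  define a where "a = sum \<alpha> (S - L)"
  define P where "P = norm_M M (\<Sum>v\<in>S. \<alpha> v *\<^sub>R rvec v)"
  define PL where "PL = norm_M M (\<Sum>v\<in>L. \<alpha> v *\<^sub>R rvec v)"
  define X where "X = (\<Sum>v\<in>L. \<alpha> v * enn2real (\<delta> (w + v)))"
  have "s + a = 1"
    using sum.subset_diff[OF LS fin, of \<alpha>] \<open>sum \<alpha> S = 1\<close> unfolding s_def a_def by simp
  have "0 \<le> s" "0 \<le> X"
    using \<alpha>_nonneg LS unfolding s_def X_def by (auto intro!: sum_nonneg)
  have "0 \<le> PL" "PL \<le> P" "0 \<le> P"
    unfolding PL_def P_def
    using norm_M_nonneg[OF posdef] norm_M_sum_subset_le[OF fin LS \<alpha>_nonneg acute] by auto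
  have "ennreal P < ennreal (D + k)"
    using near_optimal unfolding stencil_value_def P_def by (rule le_less_trans[rotated]) simp
  then have "k < D"
    using gap mult_nonneg_nonneg[OF \<open>0 \<le> \<theta>\<close> \<open>0 \<le> P\<close>] \<open>0 \<le> P\<close>
    unfolding P_def[symmetric] by (simp add: ennreal_less_iff algebra_simps)
  then have "P + X + a * (D - k) < D + k"
    using stencil_value_less_split[OF posdef st _ near_optimal, of "D - k"]
    unfolding P_def X_def a_def L_def by simp
  then have descent: "\<theta> * PL + X < s * D"
    using descent_arith \<open>s + a = 1\<close> \<open>0 \<le> s\<close> \<open>0 \<le> k\<close> \<open>0 \<le> \<theta>\<close> \<open>PL \<le> P\<close> gap
    unfolding P_def[symmetric] by blast
  with \<open>0 \<le> s\<close> \<open>0 \<le> X\<close> mult_nonneg_nonneg[OF \<open>0 \<le> \<theta>\<close> \<open>0 \<le> PL\<close>] show "0 < sum \<alpha> L"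
    unfolding s_def[symmetric] by (cases "s = 0") auto
  have "(\<Sum>v\<in>L. ennreal (\<alpha> v) * \<delta> (w + v)) = ennreal X"
    unfolding X_def using LS \<alpha>_nonneg
    by (intro sum_ennreal_mult_finite) (auto simp: L_def less_top[symmetric] intro: order.strict_trans)
  then have "ennreal \<theta> * ennreal PL + (\<Sum>v\<in>L. ennreal (\<alpha> v) * \<delta> (w + v)) = ennreal (\<theta> * PL + X)"
    using \<open>0 \<le> \<theta>\<close> \<open>0 \<le> PL\<close> \<open>0 \<le> X\<close> by (simp add: ennreal_mult ennreal_plus)
  also have "\<dots> < ennreal (s * D)"
    using descent mult_nonneg_nonneg[OF \<open>0 \<le> \<theta>\<close> \<open>0 \<le> PL\<close>] \<open>0 \<le> X\<close> by (intro ennreal_lessI) linarith+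
  finally show "ennreal \<theta> * ennreal (norm_M M (\<Sum>v\<in>L. \<alpha> v *\<^sub>R rvec v))
          + (\<Sum>v\<in>L. ennreal (\<alpha> v) * \<delta> (w + v)) < ennreal (sum \<alpha> L * D)"
    unfolding PL_def s_def .
qed

lemma scaled_comparison_step:
  fixes \<theta> k D :: real
  assumes posdef: "sym_posdef M" and mesh: "M_reduced_mesh M \<T>"
    and sup: "super_solution M \<T> \<delta>p" and sub: "sub_solution M \<T> \<delta>m"
    and "0 \<le> \<theta>" "0 < k" "0 \<le> D"
    and gap: "\<And>S \<alpha>. stencil \<T> S \<alpha> \<Longrightarrow> 2 * k \<le> (1 - \<theta>) * norm_M M (\<Sum>v\<in>S. \<alpha> v *\<^sub>R rvec v)"
    and below: "\<And>u. \<delta>p u < ennreal (D - k) \<Longrightarrow> ennreal \<theta> * \<delta>m u \<le> \<delta>p u"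
    and "w \<noteq> 0" "\<delta>p w = ennreal D"
  shows "ennreal \<theta> * \<delta>m w \<le> \<delta>p w"
proof (rule ccontr)
  assume "\<not> ennreal \<theta> * \<delta>m w \<le> \<delta>p w"
  have "hopf_lax M \<T> \<delta>p w \<le> \<delta>p w"
    using sup \<open>w \<noteq> 0\<close> unfolding super_solution_def by blast
  also have "\<dots> < ennreal (D + k)"
    using \<open>\<delta>p w = ennreal D\<close> \<open>0 < k\<close> \<open>0 \<le> D\<close> by (simp add: ennreal_lessI)
  finally have "hopf_lax M \<T> \<delta>p w < ennreal (D + k)" .
  then obtain S \<alpha> where st: "stencil \<T> S \<alpha>" and near: "stencil_value M \<delta>p w S \<alpha> < ennreal (D + k)"
    by (rule hopf_lax_lessE)
  define L where "L = {v \<in> S. \<delta>p (w + v) < ennreal (D - k)}"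
  have acute: "\<And>v u. v \<in> S \<Longrightarrow> u \<in> S \<Longrightarrow> 0 \<le> inner_M M (rvec v) (rvec u)"
    using mesh_stencil_acute[OF mesh st] .
  note descent = stencil_descent[OF posdef st acute \<open>0 \<le> \<theta>\<close> less_imp_le[OF \<open>0 < k\<close>]
      gap[OF st] near, folded L_def]
  obtain T where "T \<in> \<T>" "L \<subseteq> T - {0}" and \<alpha>_nonneg: "\<And>v. v \<in> L \<Longrightarrow> 0 \<le> \<alpha> v"
    using st unfolding stencil_def L_def by blast
  have "ennreal (sum \<alpha> L) * (ennreal \<theta> * \<delta>m w) = ennreal \<theta> * (ennreal (sum \<alpha> L) * \<delta>m w)"
    by (simp add: ac_simps)
  also have "\<dots> \<le> ennreal \<theta> * stencil_value M \<delta>m w L \<alpha>"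
    using sub_solution_le_stencil_value[OF sub \<open>w \<noteq> 0\<close> \<open>T \<in> \<T>\<close> \<open>L \<subseteq> T - {0}\<close> \<alpha>_nonneg descent(1)]
    by (simp add: mult_left_mono)
  also have "\<dots> = ennreal \<theta> * ennreal (norm_M M (\<Sum>v\<in>L. \<alpha> v *\<^sub>R rvec v))
                    + (\<Sum>v\<in>L. ennreal (\<alpha> v) * (ennreal \<theta> * \<delta>m (w + v)))"
    unfolding stencil_value_def by (simp add: distrib_left sum_distrib_left ac_simps)
  also have "\<dots> \<le> ennreal \<theta> * ennreal (norm_M M (\<Sum>v\<in>L. \<alpha> v *\<^sub>R rvec v))
                    + (\<Sum>v\<in>L. ennreal (\<alpha> v) * \<delta>p (w + v))"
    using below unfolding L_def by (intro add_left_mono sum_mono mult_left_mono) auto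
  also have "\<dots> < ennreal (sum \<alpha> L * D)"
    by (rule descent(2))
  also have "\<dots> = ennreal (sum \<alpha> L) * \<delta>p w"
    using descent(1) \<open>\<delta>p w = ennreal D\<close> by (simp add: ennreal_mult')
  finally show False
    using \<open>\<not> _ \<le> \<delta>p w\<close> by (meson linorder_not_le mult_left_mono not_less_iff_gr_or_eq zero_le)
qed

lemma scaled_comparison_below_level:
  fixes \<theta> k :: real
  assumes posdef: "sym_posdef M" and mesh: "M_reduced_mesh M \<T>"
    and sup: "super_solution M \<T> \<delta>p" and sub: "sub_solution M \<T> \<delta>m"
    and "0 \<le> \<theta>" "0 < k"
    and gap: "\<And>S \<alpha>. stencil \<T> S \<alpha> \<Longrightarrow> 2 * k \<le> (1 - \<theta>) * norm_M M (\<Sum>v\<in>S. \<alpha> v *\<^sub>R rvec v)"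
  shows "\<delta>p u < ennreal (real n * k) \<Longrightarrow> ennreal \<theta> * \<delta>m u \<le> \<delta>p u"
proof (induction n arbitrary: u)
  case 0
  then show ?case by simp
next
  case (Suc n)
  define D where "D = enn2real (\<delta>p u)"
  have "\<delta>p u < \<infinity>"
    using Suc.prems by (rule order.strict_trans) simp
  then have "\<delta>p u = ennreal D" "0 \<le> D"
    unfolding D_def by (simp_all add: ennreal_enn2real)
  with Suc.prems have "D - k < real n * k"
    by (simp add: ennreal_less_iff algebra_simps)
  show ?case
  proof (cases "u = 0")
    case True
    then show ?thesis
      using sub unfolding sub_solution_def by simp
  next
    case False
    show ?thesis
    proof (rule scaled_comparison_step[OF posdef mesh sup sub \<open>0 \<le> \<theta>\<close> \<open>0 < k\<close> \<open>0 \<le> D\<close> gap _ False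
          \<open>\<delta>p u = ennreal D\<close>])
      fix u' assume "\<delta>p u' < ennreal (D - k)"
      also have "\<dots> \<le> ennreal (real n * k)"
        using \<open>D - k < real n * k\<close> by (intro ennreal_leI) simp
      finally show "ennreal \<theta> * \<delta>m u' \<le> \<delta>p u'"
        by (rule Suc.IH)
    qed
  qed
qed

lemma scaled_sub_solution_le_super_solution:
  fixes \<theta> :: real
  assumes posdef: "sym_posdef M" and mesh: "M_reduced_mesh M \<T>"
    and sup: "super_solution M \<T> \<delta>p" and sub: "sub_solution M \<T> \<delta>m"
    and "0 \<le> \<theta>" "\<theta> < 1"
  shows "ennreal \<theta> * \<delta>m z \<le> \<delta>p z"
proof (cases "\<delta>p z = \<infinity>")
  case True
  then show ?thesis by simp
next
  case False
  obtain \<rho> where "0 < \<rho>" and \<rho>: "\<And>S \<alpha>. stencil \<T> S \<alpha> \<Longrightarrow> \<rho> \<le> norm_M M (\<Sum>v\<in>S. \<alpha> v *\<^sub>R rvec v)"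
    using mesh_stencil_norm_ge[OF posdef mesh] by blast
  define k where "k = (1 - \<theta>) * \<rho> / 2"
  have "0 < k"
    unfolding k_def using \<open>0 < \<rho>\<close> \<open>\<theta> < 1\<close> by simp
  have gap: "\<And>S \<alpha>. stencil \<T> S \<alpha> \<Longrightarrow> 2 * k \<le> (1 - \<theta>) * norm_M M (\<Sum>v\<in>S. \<alpha> v *\<^sub>R rvec v)"
    unfolding k_def using \<rho> \<open>\<theta> < 1\<close> by simp
  obtain n :: nat where "enn2real (\<delta>p z) / k < n"
    using reals_Archimedean2 by blast
  with False \<open>0 < k\<close> have "\<delta>p z < ennreal (real n * k)"
    by (auto simp: field_simps ennreal_less_iff less_top[symmetric] ennreal_enn2real
        intro!: ennreal_lessI[THEN le_less_trans[rotated]])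
  then show ?thesis
    using scaled_comparison_below_level[OF posdef mesh sup sub \<open>0 \<le> \<theta>\<close> \<open>0 < k\<close> gap] by blast
qed

lemma ennreal_le_if_scaled_le:
  fixes x y :: ennreal
  assumes "\<And>\<theta>. 0 \<le> \<theta> \<Longrightarrow> \<theta> < 1 \<Longrightarrow> ennreal \<theta> * x \<le> y"
  shows "x \<le> y"
proof (rule dense_le)
  fix u assume "u < x"
  then obtain r where u: "u = ennreal r" "0 \<le> r"
    by (cases u) (auto simp: top_unique)
  show "u \<le> y"
  proof (cases "x = \<infinity>")
    case True
    then have "y = \<infinity>"
      using assms[of "1 / 2"] by (simp add: ennreal_mult_top top_unique)
    then show ?thesis by simp
  next
    case False
    then obtain q where q: "x = ennreal q" "0 \<le> q"
      by (cases x) auto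
    with \<open>u < x\<close> u have "r < q"
      by (simp add: ennreal_less_iff)
    with u q have "u = ennreal (r / q) * x" and "0 \<le> r / q" "r / q < 1"
      by (auto simp: ennreal_mult[symmetric])
    then show ?thesis
      using assms by simp
  qed
qed

theorem proposition1p4:
  fixes M :: "real ^ 'n ^ 'n" and \<T> :: "(int ^ 'n) set set"
    and \<delta>p \<delta>m :: "int ^ 'n \<Rightarrow> ennreal"
  assumes "sym_posdef M"
    and "M_reduced_mesh M \<T>"
    and "super_solution M \<T> \<delta>p"
    and "sub_solution M \<T> \<delta>m"
  shows "\<forall>z. \<delta>m z \<le> \<delta>p z"
  using ennreal_le_if_scaled_le scaled_sub_solution_le_super_solution[OF assms] by blast

end
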